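(* Let $X$ be an (infinite) topological space. Then $|X|\le nh(X)^{c(X)\chi(X)}$.
   Context: A non-empty subset $A$ of a topological space $X$ is called finitely non-Hausdorff if for every non-empty finite subset $F\subseteq A$ and every family $\{U_x:x\in F\}$ where each $U_x$ is an open neighborhood of $x$, we have $\bigcap_{x\in F}U_x\neq\emptyset$. The non-Hausdorff number is $nh(X):=1+\sup\{|A|: A\subseteq X \text{ is finitely non-Hausdorff}\}$. The cellularity is $c(X):=\sup\{|\mathcal U|:\mathcal U$ a family of pairwise disjoint non-empty open subsets of $X\}+\omega$, and $\chi(X)=\sup_{x\in X}\chi(x,X)$ is the character, where $\chi(x,X)$ is the minimal cardinality of a local base at $x$. Throughout the paper, "space" means infinite topological space; exponentiation is cardinal exponentiation. *)

theory Defs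
  imports "HOL-Analysis.Analysis"
begin

text \<open>Cardinals are represented, as in HOL's BNF cardinal library, by well-order
relations; card_of A is the cardinal of the set A, <=o / =o compare cardinals.\<close>

text \<open>S realizes the supremum of the cardinalities of the members of F
(least upper bound; all cardinals not exceeding card_of S are realized by subsets
of S, so quantifying over sets of the same type as S suffices).\<close>
definition is_card_sup :: "'x set set \<Rightarrow> 'b set \<Rightarrow> bool" where
  "is_card_sup F S \<longleftrightarrow>
     (\<forall>A\<in>F. (card_of A, card_of S) \<in> ordLeq) \<and>
     (\<forall>B::'b set. (\<forall>A\<in>F. (card_of A, card_of B) \<in> ordLeq) \<longrightarrow> (card_of S, card_of B) \<in> ordLeq)"

definition finitely_non_hausdorff :: "'a topology \<Rightarrow> 'a set \<Rightarrow> bool" where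
  "finitely_non_hausdorff X A \<longleftrightarrow>
     A \<noteq> {} \<and> A \<subseteq> topspace X \<and>
     (\<forall>F U. F \<subseteq> A \<and> finite F \<and> F \<noteq> {} \<and> (\<forall>x\<in>F. openin X (U x) \<and> x \<in> U x)
        \<longrightarrow> (\<Inter>x\<in>F. U x) \<noteq> {})"

text \<open>card_of N equals nh(X) = 1 + sup { |A| : A finitely non-Hausdorff }.\<close>
definition is_nh :: "'a topology \<Rightarrow> 'b set \<Rightarrow> bool" where
  "is_nh X N \<longleftrightarrow> (\<exists>S::'a set. is_card_sup {A. finitely_non_hausdorff X A} S \<and>
       (card_of N, BNF_Cardinal_Arithmetic.csum (card_of (UNIV::unit set)) (card_of S)) \<in> ordIso)"

definition cellular_family :: "'a topology \<Rightarrow> 'a set set \<Rightarrow> bool" where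
  "cellular_family X \<U> \<longleftrightarrow> (\<forall>U\<in>\<U>. openin X U \<and> U \<noteq> {}) \<and> pairwise disjnt \<U>"

text \<open>card_of C equals c(X) = sup { |U| : U cellular } + omega.\<close>
definition is_cellularity :: "'a topology \<Rightarrow> 'b set \<Rightarrow> bool" where
  "is_cellularity X C \<longleftrightarrow> (\<exists>S::'a set set set. is_card_sup {\<U>. cellular_family X \<U>} S \<and>
       (card_of C, BNF_Cardinal_Arithmetic.csum (card_of S) natLeq) \<in> ordIso)"

definition local_base :: "'a topology \<Rightarrow> 'a \<Rightarrow> 'a set set \<Rightarrow> bool" where
  "local_base X x \<B> \<longleftrightarrow> (\<forall>B\<in>\<B>. openin X B \<and> x \<in> B) \<and>
     (\<forall>U. openin X U \<and> x \<in> U \<longrightarrow> (\<exists>B\<in>\<B>. B \<subseteq> U))"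

definition minimal_local_base :: "'a topology \<Rightarrow> 'a \<Rightarrow> 'a set set \<Rightarrow> bool" where
  "minimal_local_base X x \<B> \<longleftrightarrow> local_base X x \<B> \<and>
     (\<forall>\<B>'. local_base X x \<B>' \<longrightarrow> (card_of \<B>, card_of \<B>') \<in> ordLeq)"

definition is_character :: "'a topology \<Rightarrow> 'b set \<Rightarrow> bool" where
  "is_character X H \<longleftrightarrow> (\<exists>S::'a set set set.
       is_card_sup {\<B>. \<exists>x\<in>topspace X. minimal_local_base X x \<B>} S \<and>
       (card_of H, card_of S) \<in> ordIso)"

end

theory Submission
  imports Defs "HOL-Algebra.Free_Abelian_Groups" (* for HOL-Cardinals *)
begin

text \<open>Let \<open>\<kappa> = c(X)\<chi>(X)\<close> and \<open>\<theta> = nh(X)^\<kappa>\<close>, so that \<open>\<kappa> < \<theta> = \<theta>^\<kappa>\<close>. Fix local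
  bases indexed by a set of size \<open>\<kappa>\<close>; for a finite set \<open>T\<close> of indices let \<open>U(x,T)\<close> be the
  intersection of the corresponding basic neighbourhoods of \<open>x\<close>. For a family \<open>K\<close> of sets
  \<open>K(T)\<close>, a set \<open>Q\<close> escapes \<open>K\<close> if for no finite \<open>F \<subseteq> Q\<close> the intersection of the
  \<open>U(q,T)\<close>, \<open>q \<in> F\<close>, lies inside \<open>K(T)\<close>; a point \<open>y\<close> realizes \<open>K\<close> over \<open>Q\<close> if each
  \<open>U(y,T)\<close> misses \<open>K(T)\<close> while \<open>K(T)\<close> contains every such intersection that misses \<open>U(y,T)\<close>.

  A maximal \<open>K\<close>-escaping set is finitely non-Hausdorff, hence of size at most \<open>\<theta>\<close>, and no
  point outside it realizes \<open>K\<close> over it, since that point could be added. On the other hand,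
  because \<open>c(X) \<le> \<kappa>\<close>, every point \<open>y\<close> realizes over any \<open>M\<close> a family \<open>K\<close> whose members are
  closures of unions of \<open>\<kappa>\<close> of these intersections, and such a \<open>K\<close> is determined by \<open>\<kappa>\<close> points
  of \<open>M\<close>. Closing off gives \<open>M\<close> of size at most \<open>\<theta>\<close> containing the maximal escaping set of
  every such \<open>K\<close> coming from points of \<open>M\<close>; a point outside \<open>M\<close> would realize one of them
  over that set. So \<open>X = M\<close>.\<close>

section \<open>Cardinal arithmetic and closing off\<close>

text \<open>\<open>|I|\<close> and \<open>|Th|\<close> play the roles of \<open>\<kappa>\<close> and \<open>\<theta>\<close>.\<close>
locale cexp_stable =
  fixes I :: "'i set" and Th :: "'t set"
  assumes infinite_I: "infinite I"
    and I_ordLess_Th: "|I| <o |Th|"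
    and Func_I_Th_ordLeq: "|Func I Th| \<le>o |Th|"
begin

definition small_subsets :: "'a set \<Rightarrow> 'a set set" where
  "small_subsets A = {S. S \<subseteq> A \<and> |S| \<le>o |I|}"

lemma I_ordLeq_Th: "|I| \<le>o |Th|"
  using I_ordLess_Th ordLess_imp_ordLeq by blast

lemma infinite_Th: "infinite Th"
  using card_of_ordLeq_infinite[OF I_ordLeq_Th infinite_I] .

lemma Fpow_I_ordLeq: "|Fpow I| \<le>o |I|"
  using card_of_Fpow_infinite[OF infinite_I] ordIso_iff_ordLeq by blast

lemma finite_ordLeq_I: "finite F \<Longrightarrow> |F| \<le>o |I|"
  using finite_ordLess_infinite2 infinite_I ordLess_imp_ordLeq by blast

lemma Fpow_ordLeq_Th:
  assumes "|A| \<le>o |Th|"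
  shows "|Fpow A| \<le>o |Th|"
proof -
  have "|Fpow Th| \<le>o |Th|"
    using card_of_Fpow_infinite[OF infinite_Th] ordIso_iff_ordLeq by blast
  with card_of_Fpow_mono[OF assms] show ?thesis
    by (rule ordLeq_transitive)
qed

lemma Func_ordLeq_Th:
  assumes "|A| \<le>o |Th|"
  shows "|Func I A| \<le>o |Th|"
proof -
  have "|A| ^c |I| \<le>o |Th| ^c |I|"
    by (rule cexp_mono1[OF assms card_of_Card_order])
  then have "|Func I A| \<le>o |Func I Th|"
    by (simp add: cexp_def Field_card_of)
  then show ?thesis
    using Func_I_Th_ordLeq by (rule ordLeq_transitive)
qed

text \<open>A nonempty set of size at most \<open>|I|\<close> is the range of a function on \<open>I\<close>,
  so there are at most \<open>|Th| ^c |I|\<close> of them.\<close>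
lemma small_subsets_ordLeq_Th:
  assumes "|A| \<le>o |Th|"
  shows "|small_subsets A| \<le>o |Th|"
proof -
  have sub: "small_subsets A \<subseteq> {{}} \<union> (\<lambda>f. f ` I) ` Func I A"
  proof
    fix S assume S: "S \<in> small_subsets A"
    show "S \<in> {{}} \<union> (\<lambda>f. f ` I) ` Func I A"
    proof (cases "S = {}")
      case False
      have "\<exists>g. g ` I = S"
        using S card_of_ordLeq2[OF False, of I] by (simp add: small_subsets_def)
      then obtain g where g: "g ` I = S" ..
      have "restrict g I \<in> Func I A" "restrict g I ` I = S"
        using S g unfolding Func_def restrict_def small_subsets_def by auto
      then show ?thesis by blast
    qed simp
  qed
  have "|{{}::'a set}| \<le>o |Th|"
    using infinite_Th by (intro card_of_singl_ordLeq) blast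
  moreover have "|(\<lambda>f. f ` I) ` Func I A| \<le>o |Th|"
    using card_of_image Func_ordLeq_Th[OF assms] by (rule ordLeq_transitive)
  ultimately have "|{{}} \<union> (\<lambda>f. f ` I) ` Func I A| \<le>o |Th|"
    by (rule card_of_Un_ordLeq_infinite[OF infinite_Th])
  with card_of_mono1[OF sub] show ?thesis
    by (rule ordLeq_transitive)
qed

end

text \<open>Regularity of \<open>cardSuc |I|\<close> puts every small subset of the union of the stages
  inside a single stage.\<close>
locale closing_off = cexp_stable I Th for I :: "'i set" and Th :: "'t set" +
  fixes G :: "'a set \<Rightarrow> 'a set"
  assumes card_G: "\<And>D. |D| \<le>o |I| \<Longrightarrow> |G D| \<le>o |Th|"
begin

definition rho :: "'i set rel" where
  "rho = cardSuc |I|"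

definition step :: "'a set \<Rightarrow> 'a set" where
  "step A = A \<union> \<Union>(G ` small_subsets A)"

definition stage :: "'i set \<Rightarrow> 'a set" where
  "stage = wo_rel.worec rho (\<lambda>f i. step (\<Union>j\<in>underS rho i. f j))"

definition closed_set :: "'a set" where
  "closed_set = (\<Union>i\<in>Field rho. stage i)"

lemma Card_order_rho: "Card_order rho"
  unfolding rho_def by (rule cardSuc_Card_order[OF card_of_Card_order])

lemma wo_rel_rho: "wo_rel rho"
  using Card_order_rho by (rule Card_order_wo_rel)

lemma stage_eq: "stage i = step (\<Union>j\<in>underS rho i. stage j)"
proof -
  have "wo_rel.adm_wo rho (\<lambda>f i. step (\<Union>j\<in>underS rho i. f j))"
    unfolding wo_rel.adm_wo_def[OF wo_rel_rho] by auto
  then show ?thesis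
    unfolding stage_def by (subst wo_rel.worec_fixpoint[OF wo_rel_rho]) auto
qed

lemma relChain_stage: "relChain rho stage"
  unfolding relChain_def
proof (intro allI impI)
  fix i j assume ij: "(i, j) \<in> rho"
  show "stage i \<subseteq> stage j"
  proof (cases "i = j")
    case False
    then have "i \<in> underS rho j"
      using ij by (simp add: underS_def)
    then show ?thesis
      by (subst (2) stage_eq) (auto simp: step_def)
  qed simp
qed

lemma card_underS_rho: "i \<in> Field rho \<Longrightarrow> |underS rho i| \<le>o |I|"
  using card_of_underS[OF Card_order_rho] unfolding rho_def
  by (rule iffD1[OF cardSuc_ordLeq_ordLess[OF card_of_Card_order card_of_Card_order]])

lemma card_step:
  assumes "|A| \<le>o |Th|"
  shows "|step A| \<le>o |Th|"
proof -
  have "|\<Union>(G ` small_subsets A)| \<le>o |Th|"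
    using card_of_UNION_ordLeq_infinite[OF infinite_Th small_subsets_ordLeq_Th[OF assms]] card_G
    by (auto simp: small_subsets_def)
  then show ?thesis
    unfolding step_def using card_of_Un_ordLeq_infinite[OF infinite_Th assms] by blast
qed

lemma card_stage: "i \<in> Field rho \<Longrightarrow> |stage i| \<le>o |Th|"
proof (induction i rule: wo_rel.well_order_induct[OF wo_rel_rho])
  case (1 i)
  have "\<forall>j\<in>underS rho i. |stage j| \<le>o |Th|"
    using 1 by (auto simp: underS_def intro: FieldI1)
  moreover have "|underS rho i| \<le>o |Th|"
    using card_underS_rho[OF "1.prems"] I_ordLeq_Th by (rule ordLeq_transitive)
  ultimately have "|\<Union>j\<in>underS rho i. stage j| \<le>o |Th|"
    using card_of_UNION_ordLeq_infinite[OF infinite_Th] by blast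
  then show ?case
    by (subst stage_eq) (rule card_step)
qed

lemma card_closed_set: "|closed_set| \<le>o |Th|"
proof -
  have "rho \<le>o |Th|"
    unfolding rho_def
    by (rule iffD1[OF cardSuc_ordLess_ordLeq[OF card_of_Card_order card_of_Card_order] I_ordLess_Th])
  then have "|Field rho| \<le>o |Th|"
    by (rule ordIso_ordLeq_trans[OF card_of_Field_ordIso[OF Card_order_rho]])
  then show ?thesis
    unfolding closed_set_def using card_of_UNION_ordLeq_infinite[OF infinite_Th] card_stage by blast
qed

lemma exists_later_stage:
  assumes i: "i \<in> Field rho"
  obtains j where "j \<in> Field rho" "i \<in> underS rho j"
proof -
  have "Cinfinite (cardSuc |I| )"
    by (rule Cinfinite_cardSuc) (simp add: cinfinite_def infinite_I card_of_Card_order)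
  then have "Field rho \<noteq> under rho i"
    using Card_order_infinite_not_under[OF Card_order_rho] by (simp add: rho_def cinfinite_def)
  then obtain j where j: "j \<in> Field rho" "(j, i) \<notin> rho"
    using under_Field[of rho i] by (auto simp: under_def)
  then have "(i, j) \<in> rho" "i \<noteq> j"
    using wo_rel.TOTALS[OF wo_rel_rho] i by blast+
  then show thesis
    using that j(1) by (simp add: underS_def)
qed

lemma closed_set_closed:
  assumes "D \<subseteq> closed_set" "|D| \<le>o |I|"
  shows "G D \<subseteq> closed_set"
proof -
  have "\<exists>i\<in>Field rho. D \<subseteq> stage i"
    unfolding rho_def
  proof (rule cardSuc_UNION[OF card_of_Card_order])
    show "infinite (Field |I| )"
      using infinite_I by simp
    show "relChain (cardSuc |I| ) stage"
      using relChain_stage unfolding rho_def .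
  qed (use assms in \<open>simp_all add: closed_set_def rho_def\<close>)
  then obtain i where i: "i \<in> Field rho" "D \<subseteq> stage i" ..
  obtain j where j: "j \<in> Field rho" "i \<in> underS rho j"
    using exists_later_stage[OF i(1)] .
  have "D \<in> small_subsets (\<Union>k\<in>underS rho j. stage k)"
    using i j assms(2) unfolding small_subsets_def by blast
  then have "G D \<subseteq> stage j"
    by (subst stage_eq) (auto simp: step_def)
  then show ?thesis
    using j(1) unfolding closed_set_def by blast
qed

end

lemma (in cexp_stable) exists_closed_under:
  assumes "\<And>D. |D| \<le>o |I| \<Longrightarrow> |G D| \<le>o |Th|"
  shows "\<exists>M. |M| \<le>o |Th| \<and> (\<forall>D\<subseteq>M. |D| \<le>o |I| \<longrightarrow> G D \<subseteq> M)"
proof -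
  interpret closing_off I Th G
    by unfold_locales (rule assms)
  show ?thesis
    using card_closed_set closed_set_closed by blast
qed

section \<open>Cellularity\<close>

lemma cellular_family_chain_Union:
  assumes "\<And>\<U>. \<U> \<in> \<C> \<Longrightarrow> cellular_family X \<U>" and "chain\<^sub>\<subseteq> \<C>"
  shows "cellular_family X (\<Union>\<C>)"
  using assms pairwise_chain_Union[of \<C> disjnt] unfolding cellular_family_def by blast

lemma cellular_family_insert:
  assumes "cellular_family X \<U>" "openin X G" "G \<noteq> {}" "\<And>W. W \<in> \<U> \<Longrightarrow> disjnt G W"
  shows "cellular_family X (insert G \<U>)"
  using assms by (auto simp: cellular_family_def pairwise_insert disjnt_sym)

lemma cellular_dense_subfamily:
  assumes cell: "\<And>\<U>. cellular_family X \<U> \<Longrightarrow> |\<U>| \<le>o |I|"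
    and opn: "\<And>j. j \<in> J \<Longrightarrow> openin X (V j)"
  shows "\<exists>J'\<subseteq>J. |J'| \<le>o |I| \<and> (\<Union>j\<in>J. V j) \<subseteq> X closure_of (\<Union>j\<in>J'. V j)"
proof -
  define \<A> where "\<A> = {\<U>. cellular_family X \<U> \<and> (\<forall>W\<in>\<U>. \<exists>j\<in>J. W \<subseteq> V j)}"
  have "\<exists>\<M>\<in>\<A>. \<forall>\<U>\<in>\<A>. \<M> \<subseteq> \<U> \<longrightarrow> \<U> = \<M>"
  proof (rule subset_Zorn')
    fix \<C> assume "subset.chain \<A> \<C>"
    then show "\<Union>\<C> \<in> \<A>"
      using cellular_family_chain_Union[of \<C> X]
      unfolding \<A>_def subset_chain_def chain_subset_def by blast
  qed
  then obtain \<M> where "\<M> \<in> \<A>" and max: "\<And>\<U>. \<U> \<in> \<A> \<Longrightarrow> \<M> \<subseteq> \<U> \<Longrightarrow> \<U> = \<M>"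
    by blast
  then have \<M>: "cellular_family X \<M>" "\<forall>W\<in>\<M>. \<exists>j\<in>J. W \<subseteq> V j"
    by (simp_all add: \<A>_def)
  obtain jf where jf: "\<And>W. W \<in> \<M> \<Longrightarrow> jf W \<in> J \<and> W \<subseteq> V (jf W)"
    using \<M>(2) by metis
  \<comment> \<open>a nonempty open piece of some \<open>V j\<close> missing \<open>\<Union>\<M>\<close> could be added to \<open>\<M>\<close>\<close>
  have dense: "(\<Union>j\<in>J. V j) \<subseteq> X closure_of \<Union>\<M>"
  proof
    fix x assume "x \<in> (\<Union>j\<in>J. V j)"
    then obtain j where j: "j \<in> J" "x \<in> V j" by blast
    show "x \<in> X closure_of \<Union>\<M>"
    proof (rule ccontr)
      assume "x \<notin> X closure_of \<Union>\<M>"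
      moreover have "x \<in> topspace X"
        using j opn openin_subset by blast
      ultimately obtain G where G: "openin X G" "x \<in> G" "G \<inter> \<Union>\<M> = {}"
        unfolding in_closure_of by auto
      define G' where "G' = G \<inter> V j"
      have G': "openin X G'" "G' \<noteq> {}" "G' \<subseteq> V j"
        using G j opn unfolding G'_def by auto
      have "\<And>W. W \<in> \<M> \<Longrightarrow> disjnt G' W"
        using G unfolding G'_def disjnt_def by blast
      then have "cellular_family X (insert G' \<M>)"
        using cellular_family_insert[OF \<M>(1) G'(1,2)] by blast
      then have "insert G' \<M> \<in> \<A>"
        using \<M>(2) G'(3) j(1) unfolding \<A>_def by blast
      moreover have "G' \<notin> \<M>"
        using G j unfolding G'_def by blast
      ultimately show False
        using max by blast
    qed
  qed
  show ?thesis
  proof (intro exI conjI)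
    show "jf ` \<M> \<subseteq> J" "|jf ` \<M>| \<le>o |I|"
      using jf card_of_image cell[OF \<M>(1)] ordLeq_transitive by blast+
    have "\<Union>\<M> \<subseteq> (\<Union>j\<in>jf ` \<M>. V j)"
      using jf by blast
    then show "(\<Union>j\<in>J. V j) \<subseteq> X closure_of (\<Union>j\<in>jf ` \<M>. V j)"
      using dense closure_of_mono by blast
  qed
qed

section \<open>Bounding the space by closing off\<close>

locale nh_bound = cexp_stable I Th for I :: "'i set" and Th :: "'t set" +
  fixes X :: "'a topology" and base :: "'a \<Rightarrow> 'i \<Rightarrow> 'a set"
  assumes openin_base: "\<And>x i. x \<in> topspace X \<Longrightarrow> i \<in> I \<Longrightarrow> openin X (base x i)"
    and mem_base: "\<And>x i. x \<in> topspace X \<Longrightarrow> i \<in> I \<Longrightarrow> x \<in> base x i"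
    and base_subset: "\<And>x V. openin X V \<Longrightarrow> x \<in> V \<Longrightarrow> \<exists>i\<in>I. base x i \<subseteq> V"
    and card_cellular_family: "\<And>\<U>. cellular_family X \<U> \<Longrightarrow> |\<U>| \<le>o |I|"
    and card_finitely_non_hausdorff: "\<And>A. finitely_non_hausdorff X A \<Longrightarrow> |A| \<le>o |Th|"
begin

definition nbhd :: "'a \<Rightarrow> 'i set \<Rightarrow> 'a set" where
  "nbhd x T = (\<Inter>i\<in>T. base x i) \<inter> topspace X"

definition joint_nbhd :: "'a set \<Rightarrow> 'i set \<Rightarrow> 'a set" where
  "joint_nbhd F T = (\<Inter>q\<in>F. nbhd q T) \<inter> topspace X"

definition realizes :: "('i set \<Rightarrow> 'a set) \<Rightarrow> 'a set \<Rightarrow> 'a \<Rightarrow> bool" where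
  "realizes K Q y \<longleftrightarrow> (\<forall>T\<in>Fpow I. nbhd y T \<inter> K T = {} \<and>
     (\<forall>F\<in>Fpow Q - {{}}. joint_nbhd F T \<inter> nbhd y T = {} \<longrightarrow> joint_nbhd F T \<subseteq> K T))"

definition escapes :: "('i set \<Rightarrow> 'a set) \<Rightarrow> 'a set \<Rightarrow> bool" where
  "escapes K Q \<longleftrightarrow> Q \<subseteq> topspace X \<and> (\<forall>T\<in>Fpow I. \<forall>F\<in>Fpow Q - {{}}. \<not> joint_nbhd F T \<subseteq> K T)"

text \<open>The families \<open>K\<close> obtained from cellularity are the \<open>selection_closure g\<close>; the selection
  \<open>g\<close> records, for each \<open>T\<close>, the \<open>\<kappa>\<close> finite sets of points whose joint neighbourhoods are used.\<close>
definition selections :: "'a set \<Rightarrow> ('i set \<Rightarrow> 'a set set) set" where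
  "selections A = Func (Fpow I) (small_subsets (Fpow A - {{}}))"

definition selection_closure :: "('i set \<Rightarrow> 'a set set) \<Rightarrow> 'i set \<Rightarrow> 'a set" where
  "selection_closure g T = X closure_of (\<Union>F\<in>g T. joint_nbhd F T)"

lemma openin_nbhd: "x \<in> topspace X \<Longrightarrow> T \<in> Fpow I \<Longrightarrow> openin X (nbhd x T)"
  unfolding nbhd_def Fpow_def by (intro openin_INT) (auto simp: openin_base)

lemma mem_nbhd: "x \<in> topspace X \<Longrightarrow> T \<in> Fpow I \<Longrightarrow> x \<in> nbhd x T"
  unfolding nbhd_def Fpow_def using mem_base by auto

lemma openin_joint_nbhd:
  "F \<in> Fpow (topspace X) \<Longrightarrow> T \<in> Fpow I \<Longrightarrow> openin X (joint_nbhd F T)"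
  unfolding joint_nbhd_def by (intro openin_INT) (auto simp: Fpow_def openin_nbhd)

lemma exists_common_index_set:
  assumes "finite F" "\<And>q. q \<in> F \<Longrightarrow> openin X (V q) \<and> q \<in> V q"
  shows "\<exists>T\<in>Fpow I. \<forall>q\<in>F. nbhd q T \<subseteq> V q"
proof -
  have "\<forall>q\<in>F. \<exists>i\<in>I. base q i \<subseteq> V q"
    using assms(2) base_subset by blast
  then obtain idx where idx: "\<And>q. q \<in> F \<Longrightarrow> idx q \<in> I \<and> base q (idx q) \<subseteq> V q"
    by metis
  have "idx ` F \<in> Fpow I"
    using idx assms(1) by (auto simp: Fpow_def)
  moreover have "\<forall>q\<in>F. nbhd q (idx ` F) \<subseteq> V q"
    using idx unfolding nbhd_def by blast
  ultimately show ?thesis ..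
qed

lemma realizes_mono: "realizes K Q y \<Longrightarrow> P \<subseteq> Q \<Longrightarrow> realizes K P y"
  unfolding realizes_def using Fpow_mono by blast

lemma escapes_insert:
  assumes esc: "escapes K Q" and y: "y \<in> topspace X" and real: "realizes K Q y"
  shows "escapes K (insert y Q)"
  unfolding escapes_def
proof (intro conjI ballI)
  show "insert y Q \<subseteq> topspace X"
    using esc y by (simp add: escapes_def)
  fix T F assume T: "T \<in> Fpow I" and F: "F \<in> Fpow (insert y Q) - {{}}"
  show "\<not> joint_nbhd F T \<subseteq> K T"
  proof (cases "y \<in> F")
    case False
    then have "F \<in> Fpow Q - {{}}"
      using F by (auto simp: Fpow_def)
    then show ?thesis
      using esc T by (simp add: escapes_def)
  next
    case True
    have disj: "nbhd y T \<inter> K T = {}"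
      using real T by (simp add: realizes_def)
    show ?thesis
    proof (cases "F = {y}")
      case True
      then have "y \<in> joint_nbhd F T"
        using mem_nbhd[OF y T] y by (simp add: joint_nbhd_def)
      then show ?thesis
        using disj mem_nbhd[OF y T] by blast
    next
      case False
      \<comment> \<open>the joint neighbourhood of \<open>F - {y}\<close> is not inside \<open>K T\<close>, so it meets \<open>nbhd y T\<close>\<close>
      have "F - {y} \<in> Fpow Q - {{}}"
        using F False \<open>y \<in> F\<close> by (auto simp: Fpow_def)
      then have "joint_nbhd (F - {y}) T \<inter> nbhd y T \<noteq> {}"
        using esc real T by (auto simp: escapes_def realizes_def)
      moreover have "joint_nbhd F T = joint_nbhd (F - {y}) T \<inter> nbhd y T"
        using \<open>y \<in> F\<close> by (auto simp: joint_nbhd_def nbhd_def)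
      ultimately show ?thesis
        using disj by blast
    qed
  qed
qed

lemma finitely_non_hausdorff_escapes:
  assumes esc: "escapes K Q" and "Q \<noteq> {}"
  shows "finitely_non_hausdorff X Q"
  unfolding finitely_non_hausdorff_def
proof (intro conjI allI impI)
  show "Q \<noteq> {}" "Q \<subseteq> topspace X"
    using assms by (simp_all add: escapes_def)
  fix F V assume F: "F \<subseteq> Q \<and> finite F \<and> F \<noteq> {} \<and> (\<forall>x\<in>F. openin X (V x) \<and> x \<in> V x)"
  then obtain T where T: "T \<in> Fpow I" "\<forall>q\<in>F. nbhd q T \<subseteq> V q"
    using exists_common_index_set[of F V] by blast
  have "\<not> joint_nbhd F T \<subseteq> K T"
    using esc F T(1) by (auto simp: escapes_def Fpow_def)
  moreover have "joint_nbhd F T \<subseteq> (\<Inter>x\<in>F. V x)"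
    using T(2) unfolding joint_nbhd_def by blast
  ultimately show "(\<Inter>x\<in>F. V x) \<noteq> {}"
    by blast
qed

lemma exists_maximal_escaping:
  "\<exists>Q. escapes K Q \<and> (\<forall>Q'. escapes K Q' \<longrightarrow> Q \<subseteq> Q' \<longrightarrow> Q' = Q)"
proof -
  have "\<exists>Q\<in>{Q. escapes K Q}. \<forall>Q'\<in>{Q. escapes K Q}. Q \<subseteq> Q' \<longrightarrow> Q' = Q"
  proof (rule subset_Zorn_nonempty)
    have "escapes K {}"
      by (auto simp: escapes_def Fpow_def)
    then show "{Q. escapes K Q} \<noteq> {}"
      by blast
  next
    fix \<C> assume \<C>: "\<C> \<noteq> {}" "subset.chain {Q. escapes K Q} \<C>"
    show "\<Union>\<C> \<in> {Q. escapes K Q}"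
      unfolding mem_Collect_eq escapes_def
    proof (intro conjI ballI)
      show "\<Union>\<C> \<subseteq> topspace X"
        using \<C> by (auto simp: subset_chain_def escapes_def)
      fix T F assume T: "T \<in> Fpow I" and F: "F \<in> Fpow (\<Union>\<C>) - {{}}"
      obtain Q where "Q \<in> \<C>" "F \<subseteq> Q"
        using finite_subset_Union_chain[of F \<C>] F \<C> by (auto simp: Fpow_def)
      then have "escapes K Q" "F \<in> Fpow Q - {{}}"
        using \<C>(2) F by (auto simp: subset_chain_def Fpow_def)
      then show "\<not> joint_nbhd F T \<subseteq> K T"
        using T by (simp add: escapes_def)
    qed
  qed
  then show ?thesis
    by blast
qed

lemma exists_small_unrealized:
  "\<exists>Q. Q \<subseteq> topspace X \<and> |Q| \<le>o |Th| \<and> (\<forall>y\<in>topspace X - Q. \<not> realizes K Q y)"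
proof -
  obtain Q where esc: "escapes K Q" and max: "\<And>Q'. escapes K Q' \<Longrightarrow> Q \<subseteq> Q' \<Longrightarrow> Q' = Q"
    using exists_maximal_escaping by blast
  have "|Q| \<le>o |Th|"
  proof (cases "Q = {}")
    case True
    then show ?thesis
      by (simp add: card_of_empty)
  next
    case False
    then show ?thesis
      using card_finitely_non_hausdorff finitely_non_hausdorff_escapes[OF esc] by blast
  qed
  moreover have "\<not> realizes K Q y" if "y \<in> topspace X - Q" for y
    using escapes_insert[OF esc] max[of "insert y Q"] that by blast
  ultimately show ?thesis
    using esc unfolding escapes_def by blast
qed

lemma card_selections:
  assumes "|A| \<le>o |Th|"
  shows "|selections A| \<le>o |Th|"
proof -
  have "|Fpow A - {{}}| \<le>o |Th|"
    by (rule ordLeq_transitive[OF card_of_mono1 Fpow_ordLeq_Th[OF assms]]) blast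
  then have B: "|small_subsets (Fpow A - {{}})| \<le>o |Th|"
    by (rule small_subsets_ordLeq_Th)
  have "|small_subsets (Fpow A - {{}})| ^c |Fpow I| \<le>o |Th| ^c |I|"
    by (rule cexp_mono'[OF B Fpow_I_ordLeq]) (simp add: Field_card_of Fpow_not_empty)
  then have "|selections A| \<le>o |Func I Th|"
    by (simp add: cexp_def Field_card_of selections_def)
  then show ?thesis
    using Func_I_Th_ordLeq by (rule ordLeq_transitive)
qed

lemma selection_support:
  assumes g: "g \<in> selections A"
  shows "\<exists>D\<subseteq>A. |D| \<le>o |I| \<and> g \<in> selections D"
proof (intro exI conjI)
  define D where "D = (\<Union>T\<in>Fpow I. \<Union>(g T))"
  have gT: "g T \<subseteq> Fpow A - {{}}" "|g T| \<le>o |I|" if "T \<in> Fpow I" for T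
    using g that by (auto simp: selections_def small_subsets_def Func_def)
  show "D \<subseteq> A"
    using gT unfolding D_def Fpow_def by blast
  have "|\<Union>(g T)| \<le>o |I|" if T: "T \<in> Fpow I" for T
  proof -
    have "\<forall>F\<in>g T. |F| \<le>o |I|"
      using gT[OF T] finite_ordLeq_I by (auto simp: Fpow_def)
    then have "|\<Union>F\<in>g T. F| \<le>o |I|"
      by (rule card_of_UNION_ordLeq_infinite[OF infinite_I gT(2)[OF T]])
    then show ?thesis
      by simp
  qed
  then have "\<forall>T\<in>Fpow I. |\<Union>(g T)| \<le>o |I|"
    by blast
  then show "|D| \<le>o |I|"
    unfolding D_def by (rule card_of_UNION_ordLeq_infinite[OF infinite_I Fpow_I_ordLeq])
  have "g T \<in> small_subsets (Fpow D - {{}})" if T: "T \<in> Fpow I" for T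
    using gT[OF T] T unfolding small_subsets_def D_def Fpow_def by blast
  then show "g \<in> selections D"
    using g unfolding selections_def Func_def by blast
qed

lemma exists_realized_selection:
  assumes M: "M \<subseteq> topspace X" and y: "y \<in> topspace X"
  shows "\<exists>g\<in>selections M. realizes (selection_closure g) M y"
proof -
  define J where "J T = {F\<in>Fpow M - {{}}. joint_nbhd F T \<inter> nbhd y T = {}}" for T
  have "\<exists>J'\<subseteq>J T. |J'| \<le>o |I| \<and> (\<Union>F\<in>J T. joint_nbhd F T) \<subseteq> X closure_of (\<Union>F\<in>J'. joint_nbhd F T)"
    if T: "T \<in> Fpow I" for T
  proof (rule cellular_dense_subfamily[OF card_cellular_family])
    fix F assume "F \<in> J T"
    then show "openin X (joint_nbhd F T)"
      using M T openin_joint_nbhd Fpow_mono[OF M] unfolding J_def by blast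
  qed
  then obtain h where h: "\<And>T. T \<in> Fpow I \<Longrightarrow> h T \<subseteq> J T \<and> |h T| \<le>o |I| \<and>
      (\<Union>F\<in>J T. joint_nbhd F T) \<subseteq> X closure_of (\<Union>F\<in>h T. joint_nbhd F T)"
    by metis
  define g where "g = restrict h (Fpow I)"
  have "g \<in> selections M"
    using h unfolding g_def selections_def Func_def small_subsets_def J_def by auto
  moreover have "realizes (selection_closure g) M y"
    unfolding realizes_def
  proof (intro ballI conjI impI)
    fix T assume T: "T \<in> Fpow I"
    have "nbhd y T \<inter> (\<Union>F\<in>h T. joint_nbhd F T) = {}"
      using h[OF T] unfolding J_def by blast
    then show "nbhd y T \<inter> selection_closure g T = {}"
      using openin_Int_closure_of_eq_empty[OF openin_nbhd[OF y T]] T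
      by (simp add: selection_closure_def g_def)
    fix F assume "F \<in> Fpow M - {{}}" "joint_nbhd F T \<inter> nbhd y T = {}"
    then have "F \<in> J T"
      by (simp add: J_def)
    then show "joint_nbhd F T \<subseteq> selection_closure g T"
      using h[OF T] T by (auto simp: selection_closure_def g_def)
  qed
  ultimately show ?thesis by blast
qed

lemma card_topspace: "|topspace X| \<le>o |Th|"
proof -
  obtain Q where Q: "\<And>K. Q K \<subseteq> topspace X \<and> |Q K| \<le>o |Th| \<and>
      (\<forall>y\<in>topspace X - Q K. \<not> realizes K (Q K) y)"
    using exists_small_unrealized by metis
  define G where "G D = (\<Union>g\<in>selections D. Q (selection_closure g))" for D
  have "|G D| \<le>o |Th|" if "|D| \<le>o |I|" for D
  proof -
    have "|selections D| \<le>o |Th|"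
      by (rule card_selections[OF ordLeq_transitive[OF that I_ordLeq_Th]])
    then show ?thesis
      unfolding G_def using Q by (intro card_of_UNION_ordLeq_infinite[OF infinite_Th]) auto
  qed
  then obtain M where card_M: "|M| \<le>o |Th|" and closed: "\<And>D. D \<subseteq> M \<Longrightarrow> |D| \<le>o |I| \<Longrightarrow> G D \<subseteq> M"
    using exists_closed_under by metis
  have "topspace X \<subseteq> M"
  proof
    fix y assume y: "y \<in> topspace X"
    show "y \<in> M"
    proof (rule ccontr)
      assume "y \<notin> M"
      obtain g where g: "g \<in> selections (topspace X \<inter> M)"
        and real: "realizes (selection_closure g) (topspace X \<inter> M) y"
        using exists_realized_selection[OF _ y] by blast
      obtain D where "D \<subseteq> M" "|D| \<le>o |I|" "g \<in> selections D"
        using selection_support[OF g] by blast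
      then have "Q (selection_closure g) \<subseteq> topspace X \<inter> M"
        using closed Q unfolding G_def by blast
      then show False
        using realizes_mono[OF real] Q \<open>y \<notin> M\<close> y by blast
    qed
  qed
  then show ?thesis
    by (rule ordLeq_transitive[OF card_of_mono1 card_M])
qed

end

section \<open>The cardinal functions\<close>

lemma is_card_sup_upper: "is_card_sup F S \<Longrightarrow> A \<in> F \<Longrightarrow> |A| \<le>o |S|"
  unfolding is_card_sup_def by blast

lemma infinite_cellularity: "is_cellularity X C \<Longrightarrow> infinite C"
proof -
  assume "is_cellularity X C"
  then obtain S :: "'a set set set" where "|C| =o |S| +c natLeq"
    unfolding is_cellularity_def by blast
  moreover have "natLeq \<le>o |S| +c natLeq"
    by (rule ordLeq_csum2[OF natLeq_Card_order])
  ultimately have "natLeq \<le>o |C|"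
    using ordLeq_ordIso_trans ordIso_symmetric by blast
  then show "infinite C"
    using infinite_iff_natLeq_ordLeq by blast
qed

lemma card_cellular_family_le_cellularity:
  assumes "is_cellularity X C" "cellular_family X \<U>"
  shows "|\<U>| \<le>o |C|"
proof -
  obtain S :: "'a set set set" where S: "is_card_sup {\<U>. cellular_family X \<U>} S" and C: "|C| =o |S| +c natLeq"
    using assms(1) unfolding is_cellularity_def by blast
  have "|\<U>| \<le>o |S|"
    using is_card_sup_upper[OF S] assms(2) by simp
  also have "|S| \<le>o |S| +c natLeq"
    by (rule ordLeq_csum1[OF card_of_Card_order])
  also have "|S| +c natLeq =o |C|"
    by (rule ordIso_symmetric[OF C])
  finally show ?thesis .
qed

lemma finitely_non_hausdorff_singleton:
  "x \<in> topspace X \<Longrightarrow> finitely_non_hausdorff X {x}"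
  unfolding finitely_non_hausdorff_def by (auto simp: subset_singleton_iff)

lemma card_finitely_non_hausdorff_le_nh:
  assumes "is_nh X N" "finitely_non_hausdorff X A"
  shows "|A| \<le>o |N|"
proof -
  obtain S :: "'a set" where S: "is_card_sup {A. finitely_non_hausdorff X A} S"
    and N: "|N| =o |UNIV::unit set| +c |S|"
    using assms(1) unfolding is_nh_def by blast
  have "|A| \<le>o |S|"
    using is_card_sup_upper[OF S] assms(2) by simp
  also have "|S| \<le>o |UNIV::unit set| +c |S|"
    by (rule ordLeq_csum2[OF card_of_Card_order])
  also have "|UNIV::unit set| +c |S| =o |N|"
    by (rule ordIso_symmetric[OF N])
  finally show ?thesis .
qed

text \<open>The summand \<open>1\<close> in \<open>nh(X) = 1 + sup\<close> makes \<open>nh(X) \<ge> 2\<close>, as singletons are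
  finitely non-Hausdorff.\<close>
lemma ctwo_le_nh:
  assumes "is_nh X N" "topspace X \<noteq> {}"
  shows "ctwo \<le>o |N|"
proof -
  obtain S :: "'a set" where S: "is_card_sup {A. finitely_non_hausdorff X A} S"
    and N: "|N| =o |UNIV::unit set| +c |S|"
    using assms(1) unfolding is_nh_def by blast
  obtain x where "x \<in> topspace X"
    using assms(2) by blast
  then have "finitely_non_hausdorff X {x}"
    by (rule finitely_non_hausdorff_singleton)
  then have "|{x}| \<le>o |S|"
    by (intro is_card_sup_upper[OF S]) simp
  then have "S \<noteq> {}"
    by (metis card_of_empty3 insert_not_empty)
  then obtain s where s: "s \<in> S"
    by blast
  have "|UNIV::bool set| \<le>o |Field ( |UNIV::unit set| +c |S| )|"
    by (rule card_of_ordLeqI[of "\<lambda>b. if b then Inl () else Inr s"])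
      (auto simp: inj_on_def Field_csum s)
  also have "|Field ( |UNIV::unit set| +c |S| )| =o |UNIV::unit set| +c |S|"
    by (rule card_of_Field_ordIso[OF Card_order_csum])
  also have "|UNIV::unit set| +c |S| =o |N|"
    by (rule ordIso_symmetric[OF N])
  finally show ?thesis
    unfolding ctwo_def .
qed

lemma local_base_nonempty: "local_base X x \<B> \<Longrightarrow> x \<in> topspace X \<Longrightarrow> \<B> \<noteq> {}"
  unfolding local_base_def by blast

lemma exists_minimal_local_base:
  assumes "x \<in> topspace X"
  shows "\<exists>\<B>. minimal_local_base X x \<B>"
proof -
  define R where "R = card_of ` {\<B>. local_base X x \<B>}"
  have "local_base X x {U. openin X U \<and> x \<in> U}"
    unfolding local_base_def by blast
  then have "R \<noteq> {}"
    unfolding R_def by blast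
  moreover have "\<forall>r\<in>R. Card_order r"
    unfolding R_def using card_of_Card_order by blast
  ultimately obtain r where r: "r \<in> R" "\<forall>r'\<in>R. r \<le>o r'"
    using exists_minim_Card_order[of R] by blast
  then obtain \<B> where "local_base X x \<B>" "r = |\<B>|"
    unfolding R_def by blast
  then have "minimal_local_base X x \<B>"
    using r unfolding minimal_local_base_def R_def by blast
  then show ?thesis ..
qed

lemma local_base_le_character:
  assumes "is_character X H" "x \<in> topspace X"
  shows "\<exists>\<B>. local_base X x \<B> \<and> |\<B>| \<le>o |H|"
proof -
  obtain S :: "'a set set set" where S: "is_card_sup {\<B>. \<exists>x\<in>topspace X. minimal_local_base X x \<B>} S"
    and H: "|H| =o |S|"
    using assms(1) unfolding is_character_def by blast
  obtain \<B> where \<B>: "minimal_local_base X x \<B>"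
    using exists_minimal_local_base[OF assms(2)] by blast
  then have "|\<B>| \<le>o |S|"
    using is_card_sup_upper[OF S] assms(2) by blast
  then have "|\<B>| \<le>o |H|"
    by (rule ordLeq_ordIso_trans[OF _ ordIso_symmetric[OF H]])
  then show ?thesis
    using \<B> unfolding minimal_local_base_def by blast
qed

lemma exists_indexed_local_bases:
  assumes "\<And>x. x \<in> topspace X \<Longrightarrow> \<exists>\<B>. local_base X x \<B> \<and> |\<B>| \<le>o |I|"
  shows "\<exists>base. \<forall>x\<in>topspace X. (\<forall>i\<in>I. openin X (base x i) \<and> x \<in> base x i) \<and>
           (\<forall>V. openin X V \<and> x \<in> V \<longrightarrow> (\<exists>i\<in>I. base x i \<subseteq> V))"
proof -
  have "\<forall>x\<in>topspace X. \<exists>b. (\<forall>i\<in>I. openin X (b i) \<and> x \<in> b i) \<and>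
      (\<forall>V. openin X V \<and> x \<in> V \<longrightarrow> (\<exists>i\<in>I. b i \<subseteq> V))"
  proof
    fix x assume x: "x \<in> topspace X"
    obtain \<B> where \<B>: "local_base X x \<B>" "|\<B>| \<le>o |I|"
      using assms[OF x] by blast
    have "\<exists>b. b ` I = \<B>"
      using card_of_ordLeq2[OF local_base_nonempty[OF \<B>(1) x], of I] \<B>(2) by simp
    then obtain b where "b ` I = \<B>" ..
    then have b: "local_base X x (b ` I)"
      using \<B>(1) by simp
    show "\<exists>b. (\<forall>i\<in>I. openin X (b i) \<and> x \<in> b i) \<and>
      (\<forall>V. openin X V \<and> x \<in> V \<longrightarrow> (\<exists>i\<in>I. b i \<subseteq> V))"
    proof (intro exI conjI)
      show "\<forall>i\<in>I. openin X (b i) \<and> x \<in> b i"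
        using b unfolding local_base_def by blast
      show "\<forall>V. openin X V \<and> x \<in> V \<longrightarrow> (\<exists>i\<in>I. b i \<subseteq> V)"
        using b unfolding local_base_def by blast
    qed
  qed
  then show ?thesis
    by (rule bchoice)
qed

lemma cexp_stable_Func:
  assumes I: "infinite I" and N: "ctwo \<le>o |N|"
  shows "cexp_stable I (Func I N)"
proof
  show "infinite I" by (rule I)
  have "|I| <o ctwo ^c |I|"
    by (rule ordLess_ctwo_cexp[OF card_of_Card_order])
  also have "ctwo ^c |I| \<le>o |N| ^c |I|"
    by (rule cexp_mono1[OF N card_of_Card_order])
  finally show "|I| <o |Func I N|"
    by (simp add: cexp_def)
  have "|I \<times> I| \<le>o |I|"
    using card_of_Times_same_infinite[OF I] ordIso_iff_ordLeq by blast
  then have "|N| ^c |I \<times> I| \<le>o |N| ^c |I|"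
    by (rule cexp_mono2'[OF _ card_of_Card_order]) (use I in auto)
  then have "|Func (I \<times> I) N| \<le>o |Func I N|"
    by (simp add: cexp_def)
  then show "|Func I (Func I N)| \<le>o |Func I N|"
    by (rule ordIso_ordLeq_trans[OF ordIso_symmetric[OF card_of_Func_Times]])
qed

lemma card_topspace_le_Func:
  assumes I: "infinite I" and N: "ctwo \<le>o |N|"
    and bases: "\<And>x. x \<in> topspace X \<Longrightarrow> \<exists>\<B>. local_base X x \<B> \<and> |\<B>| \<le>o |I|"
    and cell: "\<And>\<U>. cellular_family X \<U> \<Longrightarrow> |\<U>| \<le>o |I|"
    and fnh: "\<And>A. finitely_non_hausdorff X A \<Longrightarrow> |A| \<le>o |N|"
  shows "|topspace X| \<le>o |Func I N|"
proof -
  have "Cnotzero |I|"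
    using Cinfinite_Cnotzero[of "|I|"] I by (simp add: cinfinite_def card_of_Card_order)
  then have NI: "|N| \<le>o |Func I N|"
    using ordLeq_cexp1[OF _ card_of_Card_order[of N], of "|I|"] by (simp add: cexp_def)
  obtain base where base: "\<forall>x\<in>topspace X. (\<forall>i\<in>I. openin X (base x i) \<and> x \<in> base x i) \<and>
      (\<forall>V. openin X V \<and> x \<in> V \<longrightarrow> (\<exists>i\<in>I. base x i \<subseteq> V))"
    using exists_indexed_local_bases[OF bases] by blast
  interpret nh_bound I "Func I N" X base
  proof (rule nh_bound.intro[OF cexp_stable_Func[OF I N]], unfold_locales)
    show "openin X (base x i)" "x \<in> base x i" if "x \<in> topspace X" "i \<in> I" for x i
      using base that by blast+
    show "\<exists>i\<in>I. base x i \<subseteq> V" if "openin X V" "x \<in> V" for x V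
      using base that openin_subset by blast
    show "|A| \<le>o |Func I N|" if "finitely_non_hausdorff X A" for A
      by (rule ordLeq_transitive[OF fnh[OF that] NI])
  qed (rule cell)
  show ?thesis
    by (rule card_topspace)
qed

theorem theorem3p1:
  fixes X :: "'a topology" and N :: "'b set" and C :: "'c set" and H :: "'d set"
  assumes "infinite (topspace X)"
    and "is_nh X N" and "is_cellularity X C" and "is_character X H"
  shows "(card_of (topspace X), BNF_Cardinal_Arithmetic.cexp (card_of N) (BNF_Cardinal_Arithmetic.cprod (card_of C) (card_of H))) \<in> ordLeq"
proof -
  obtain x where x: "x \<in> topspace X"
    using assms(1) by fastforce
  obtain \<B> where "local_base X x \<B>" "|\<B>| \<le>o |H|"
    using local_base_le_character[OF assms(4) x] by blast
  then have "H \<noteq> {}"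
    by (metis local_base_nonempty[OF _ x] card_of_empty3)
  then have CI: "|C| \<le>o |C \<times> H|"
    by (rule card_of_Times1)
  have C: "infinite C"
    using infinite_cellularity[OF assms(3)] .
  then have HI: "|H| \<le>o |C \<times> H|"
    by (intro card_of_Times2) auto
  have "|topspace X| \<le>o |Func (C \<times> H) N|"
  proof (rule card_topspace_le_Func)
    show "infinite (C \<times> H)"
      using card_of_ordLeq_infinite[OF CI C] .
    show "ctwo \<le>o |N|"
      using ctwo_le_nh[OF assms(2)] x by blast
    show "\<exists>\<B>. local_base X y \<B> \<and> |\<B>| \<le>o |C \<times> H|" if "y \<in> topspace X" for y
      using local_base_le_character[OF assms(4) that] ordLeq_transitive[OF _ HI] by blast
    show "|\<U>| \<le>o |C \<times> H|" if "cellular_family X \<U>" for \<U>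
      by (rule ordLeq_transitive[OF card_cellular_family_le_cellularity[OF assms(3) that] CI])
  qed (rule card_finitely_non_hausdorff_le_nh[OF assms(2)])
  then show ?thesis
    unfolding cexp_def cprod_def Field_card_of .
qed

end
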